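(* Let $S=(X,X_0,X_S,U,\rightarrow,Y,H)$ be a metric system with metric $\mathbf{d}$ on $Y$, let $\delta\geq 0$, and let $S_C=(X_C,X_{C0},U,\rightarrow_C)$ be its $\delta$-approximate current-state estimator. Then $S$ is $\delta$-approximate current-state opaque if and only if $q\not\subseteq X_S$ for all $(x,q)\in X_C$.
   Context: A system is a tuple $S=(X,X_0,X_S,U,\rightarrow,Y,H)$ with state set $X$, initial states $X_0\subseteq X$, secret states $X_S\subseteq X$, inputs $U$, transition relation $\rightarrow\subseteq X\times U\times X$ (write $x\xrightarrow{u}x'$), outputs $Y$, output map $H:X\to Y$; it is metric if $Y$ has a metric $\mathbf{d}$. $S$ is $\delta$-approximate current-state opaque if for every $x_0\in X_0$ and every finite run $x_0\xrightarrow{u_1}x_1\cdots\xrightarrow{u_n}x_n$ with $x_n\in X_S$ there exist $x_0'\in X_0$ and a finite run $x_0'\xrightarrow{u_1'}x_1'\cdots\xrightarrow{u_n'}x_n'$ (inputs arbitrary) with $x_n'\in X\setminus X_S$ and $\max_{0\le i\le n}\mathbf{d}(H(x_i),H(x_i'))\leq\delta$. Let $\mathbf{Post}_u(x)=\{x':x\xrightarrow{u}x'\}$, $\mathbf{Post}_u(q)=\bigcup_{x\in q}\mathbf{Post}_u(x)$. The $\delta$-approximate current-state estimator is $S_C=(X_C,X_{C0},U,\rightarrow_C)$ with $X_{C0}=\{(x,q)\in X_0\times 2^{X_0}: q=\{x'\in X_0:\mathbf{d}(H(x),H(x'))\leq\delta\}\}$, and $(x,q)\xrightarrow{u}_C(x',q')$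 iff $(x,u,x')\in\rightarrow$ and $q'=\bigcup_{\hat u\in U}\mathbf{Post}_{\hat u}(q)\cap\{x''\in X:\mathbf{d}(H(x'),H(x''))\leq\delta\}$; $X_C$ is the set of states reachable from $X_{C0}$. *)

theory Defs
  imports Complex_Main
begin

text \<open>A system S = (X, X0, XS, U, T, Y, H); here the output set Y is the whole
  metric-space type 'y (with metric dist), and T is the transition relation.\<close>

definition is_system ::
  "'x set \<Rightarrow> 'x set \<Rightarrow> 'x set \<Rightarrow> 'u set \<Rightarrow> ('x \<times> 'u \<times> 'x) set \<Rightarrow> bool" where
  "is_system X X0 XS U T \<longleftrightarrow> X0 \<subseteq> X \<and> XS \<subseteq> X \<and> T \<subseteq> X \<times> U \<times> X"

text \<open>A finite run x0 -u1-> x1 ... -un-> xn of length n (states xs 0..n, inputs us 1..n).\<close>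
definition is_run :: "('x \<times> 'u \<times> 'x) set \<Rightarrow> (nat \<Rightarrow> 'x) \<Rightarrow> (nat \<Rightarrow> 'u) \<Rightarrow> nat \<Rightarrow> bool" where
  "is_run T xs us n \<longleftrightarrow> (\<forall>i<n. (xs i, us (Suc i), xs (Suc i)) \<in> T)"

definition approx_cso ::
  "'x set \<Rightarrow> 'x set \<Rightarrow> 'x set \<Rightarrow> ('x \<times> 'u \<times> 'x) set \<Rightarrow> ('x \<Rightarrow> 'y::metric_space) \<Rightarrow> real \<Rightarrow> bool" where
  "approx_cso X X0 XS T H \<delta> \<longleftrightarrow>
     (\<forall>n xs us. xs 0 \<in> X0 \<and> is_run T xs us n \<and> xs n \<in> XS \<longrightarrow>
        (\<exists>xs' us'. xs' 0 \<in> X0 \<and> is_run T xs' us' n \<and> xs' n \<in> X - XS \<and>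
           (\<forall>i\<le>n. dist (H (xs i)) (H (xs' i)) \<le> \<delta>)))"

definition Post :: "('x \<times> 'u \<times> 'x) set \<Rightarrow> 'u \<Rightarrow> 'x set \<Rightarrow> 'x set" where
  "Post T u q = {x'. \<exists>x\<in>q. (x, u, x') \<in> T}"

definition est_init :: "'x set \<Rightarrow> ('x \<Rightarrow> 'y::metric_space) \<Rightarrow> real \<Rightarrow> ('x \<times> 'x set) set" where
  "est_init X0 H \<delta> = {(x, q). x \<in> X0 \<and> q = {x' \<in> X0. dist (H x) (H x') \<le> \<delta>}}"

definition est_step ::
  "'x set \<Rightarrow> 'u set \<Rightarrow> ('x \<times> 'u \<times> 'x) set \<Rightarrow> ('x \<Rightarrow> 'y::metric_space) \<Rightarrow> real \<Rightarrow>
   'x \<times> 'x set \<Rightarrow> 'u \<Rightarrow> 'x \<times> 'x set \<Rightarrow> bool" where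
  "est_step X U T H \<delta> s u s' \<longleftrightarrow>
     (fst s, u, fst s') \<in> T \<and>
     snd s' = (\<Union>u'\<in>U. Post T u' (snd s)) \<inter> {x'' \<in> X. dist (H (fst s')) (H x'') \<le> \<delta>}"

inductive_set est_reach ::
  "'x set \<Rightarrow> 'x set \<Rightarrow> 'u set \<Rightarrow> ('x \<times> 'u \<times> 'x) set \<Rightarrow> ('x \<Rightarrow> 'y::metric_space) \<Rightarrow> real \<Rightarrow>
   ('x \<times> 'x set) set"
  for X X0 U T H \<delta> where
  init: "s \<in> est_init X0 H \<delta> \<Longrightarrow> s \<in> est_reach X X0 U T H \<delta>"
| step: "s \<in> est_reach X X0 U T H \<delta> \<Longrightarrow> est_step X U T H \<delta> s u s' \<Longrightarrow> s' \<in> est_reach X X0 U T H \<delta>"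

end

theory Submission
  imports Defs
begin

text \<open>Along a run \<open>x\<^sub>0 \<dots> x\<^sub>n\<close> of the system, the second component of the
  estimator state is exactly the set of end points of those runs from initial states whose
  outputs stay within \<open>\<delta>\<close> of the given one at every step: this holds initially by the
  definition of \<open>X\<^sub>C\<^sub>0\<close>, and the update rule extends such runs by one transition.
  Opacity says precisely that each of these sets leaves \<open>X\<^sub>S\<close>, and every one of them
  arises as an estimator state.\<close>

definition close_run_ends ::
  "'x set \<Rightarrow> ('x \<times> 'u \<times> 'x) set \<Rightarrow> ('x \<Rightarrow> 'y::metric_space) \<Rightarrow> real \<Rightarrow> (nat \<Rightarrow> 'x) \<Rightarrow> nat \<Rightarrow> 'x set"
where
  "close_run_ends X0 T H \<delta> xs n = {xs' n | xs' us'. xs' 0 \<in> X0 \<and> is_run T xs' us' n \<and>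
      (\<forall>i\<le>n. dist (H (xs i)) (H (xs' i)) \<le> \<delta>)}"

lemma is_run_Suc:
  "is_run T xs us (Suc n) \<longleftrightarrow> is_run T xs us n \<and> (xs n, us (Suc n), xs (Suc n)) \<in> T"
  unfolding is_run_def by (auto simp: less_Suc_eq)

lemma is_run_extend:
  "is_run T xs us n \<Longrightarrow> (xs n, u, x) \<in> T \<Longrightarrow> is_run T (xs(Suc n := x)) (us(Suc n := u)) (Suc n)"
  unfolding is_run_def by (auto simp: less_Suc_eq)

lemma is_run_end_in_states:
  assumes "X0 \<subseteq> X" and "T \<subseteq> X \<times> U \<times> X" and "xs 0 \<in> X0" and "is_run T xs us n"
  shows "xs n \<in> X"
  using assms unfolding is_run_def by (cases n) auto

lemma close_run_ends_cong:
  "(\<And>i. i \<le> n \<Longrightarrow> xs i = ys i) \<Longrightarrow> close_run_ends X0 T H \<delta> xs n = close_run_ends X0 T H \<delta> ys n"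
  unfolding close_run_ends_def by auto

lemma close_run_ends_0:
  "close_run_ends X0 T H \<delta> xs 0 = {x' \<in> X0. dist (H (xs 0)) (H x') \<le> \<delta>}"
proof
  show "{x' \<in> X0. dist (H (xs 0)) (H x') \<le> \<delta>} \<subseteq> close_run_ends X0 T H \<delta> xs 0"
  proof
    fix x' assume "x' \<in> {x' \<in> X0. dist (H (xs 0)) (H x') \<le> \<delta>}"
    then show "x' \<in> close_run_ends X0 T H \<delta> xs 0"
      unfolding close_run_ends_def is_run_def by (auto intro!: exI[of _ "\<lambda>_. x'"])
  qed
qed (auto simp: close_run_ends_def)

lemma close_run_ends_Suc:
  assumes "T \<subseteq> X \<times> U \<times> X"
  shows "close_run_ends X0 T H \<delta> xs (Suc n) =
    (\<Union>u\<in>U. Post T u (close_run_ends X0 T H \<delta> xs n)) \<inter> {x'' \<in> X. dist (H (xs (Suc n))) (H x'') \<le> \<delta>}"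
    (is "?lhs = ?rhs")
proof
  show "?lhs \<subseteq> ?rhs"
  proof
    fix x' assume "x' \<in> ?lhs"
    then obtain xs' us' where x': "x' = xs' (Suc n)" and init: "xs' 0 \<in> X0"
      and run: "is_run T xs' us' (Suc n)" and close: "\<forall>i\<le>Suc n. dist (H (xs i)) (H (xs' i)) \<le> \<delta>"
      unfolding close_run_ends_def by blast
    from run have step: "(xs' n, us' (Suc n), xs' (Suc n)) \<in> T" and "is_run T xs' us' n"
      unfolding is_run_Suc by auto
    then have "xs' n \<in> close_run_ends X0 T H \<delta> xs n"
      using init close unfolding close_run_ends_def by auto
    moreover have "us' (Suc n) \<in> U" and "x' \<in> X"
      using step assms x' by auto
    ultimately show "x' \<in> ?rhs"
      using step x' close unfolding Post_def by auto
  qed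
  show "?rhs \<subseteq> ?lhs"
  proof
    fix x'' assume "x'' \<in> ?rhs"
    then obtain u x where x: "x \<in> close_run_ends X0 T H \<delta> xs n" and step: "(x, u, x'') \<in> T"
      and close'': "dist (H (xs (Suc n))) (H x'') \<le> \<delta>"
      unfolding Post_def by auto
    from x obtain xs' us' where x_end: "x = xs' n" and init: "xs' 0 \<in> X0" and run: "is_run T xs' us' n"
      and close: "\<forall>i\<le>n. dist (H (xs i)) (H (xs' i)) \<le> \<delta>"
      unfolding close_run_ends_def by blast
    let ?xs' = "xs'(Suc n := x'')"
    have "is_run T ?xs' (us'(Suc n := u)) (Suc n)"
      using is_run_extend[OF run] step x_end by simp
    moreover have "\<forall>i\<le>Suc n. dist (H (xs i)) (H (?xs' i)) \<le> \<delta>"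
      using close close'' by (auto simp: le_Suc_eq)
    moreover have "?xs' 0 \<in> X0" and "x'' = ?xs' (Suc n)"
      using init by simp_all
    ultimately show "x'' \<in> ?lhs"
      unfolding close_run_ends_def by blast
  qed
qed

lemma est_reach_imp_run:
  assumes "T \<subseteq> X \<times> U \<times> X" and "s \<in> est_reach X X0 U T H \<delta>"
  shows "\<exists>n xs us. xs 0 \<in> X0 \<and> is_run T xs us n \<and> s = (xs n, close_run_ends X0 T H \<delta> xs n)"
  using assms(2)
proof (induction rule: est_reach.induct)
  case (init s)
  then show ?case unfolding est_init_def
    by (intro exI[of _ 0] exI[of _ "\<lambda>_. fst s"]) (auto simp: close_run_ends_0 is_run_def)
next
  case (step s u s')
  then obtain n xs us where init: "xs 0 \<in> X0" and run: "is_run T xs us n"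
    and s: "s = (xs n, close_run_ends X0 T H \<delta> xs n)"
    by blast
  let ?xs = "xs(Suc n := fst s')"
  have "is_run T ?xs (us(Suc n := u)) (Suc n)"
    using is_run_extend[OF run] step.hyps(2) s unfolding est_step_def by auto
  moreover have "close_run_ends X0 T H \<delta> ?xs n = close_run_ends X0 T H \<delta> xs n"
    by (rule close_run_ends_cong) auto
  then have "s' = (?xs (Suc n), close_run_ends X0 T H \<delta> ?xs (Suc n))"
    using step.hyps(2) s unfolding est_step_def close_run_ends_Suc[OF assms(1)]
    by (simp add: prod_eq_iff)
  moreover have "?xs 0 \<in> X0"
    using init by simp
  ultimately show ?case by blast
qed

lemma run_imp_est_reach:
  assumes "T \<subseteq> X \<times> U \<times> X" and "xs 0 \<in> X0" and "is_run T xs us n"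
  shows "(xs n, close_run_ends X0 T H \<delta> xs n) \<in> est_reach X X0 U T H \<delta>"
  using assms(3)
proof (induction n)
  case 0
  show ?case
    using assms(2) by (intro est_reach.init) (auto simp: est_init_def close_run_ends_0)
next
  case (Suc n)
  then have reach: "(xs n, close_run_ends X0 T H \<delta> xs n) \<in> est_reach X X0 U T H \<delta>"
    and step: "(xs n, us (Suc n), xs (Suc n)) \<in> T"
    by (simp_all add: is_run_Suc)
  show ?case
    by (rule est_reach.step[OF reach, of "us (Suc n)"])
       (simp add: est_step_def step close_run_ends_Suc[OF assms(1)])
qed

lemma est_reach_eq_close_run_ends:
  assumes "T \<subseteq> X \<times> U \<times> X"
  shows "est_reach X X0 U T H \<delta> =
    {(xs n, close_run_ends X0 T H \<delta> xs n) | xs us n. xs 0 \<in> X0 \<and> is_run T xs us n}"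
proof (intro set_eqI iffI)
  fix s assume "s \<in> est_reach X X0 U T H \<delta>"
  then obtain n xs us where "xs 0 \<in> X0" "is_run T xs us n" "s = (xs n, close_run_ends X0 T H \<delta> xs n)"
    using est_reach_imp_run[OF assms] by blast
  then show "s \<in> {(xs n, close_run_ends X0 T H \<delta> xs n) | xs us n. xs 0 \<in> X0 \<and> is_run T xs us n}"
    by blast
next
  fix s assume "s \<in> {(xs n, close_run_ends X0 T H \<delta> xs n) | xs us n. xs 0 \<in> X0 \<and> is_run T xs us n}"
  then obtain xs us n where "xs 0 \<in> X0" "is_run T xs us n" "s = (xs n, close_run_ends X0 T H \<delta> xs n)"
    by blast
  then show "s \<in> est_reach X X0 U T H \<delta>"
    using run_imp_est_reach[OF assms] by simp
qed

lemma approx_cso_iff_close_run_ends: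
  assumes "X0 \<subseteq> X" and "T \<subseteq> X \<times> U \<times> X" and "\<delta> \<ge> 0"
  shows "approx_cso X X0 XS T H \<delta> \<longleftrightarrow>
    (\<forall>xs us n. xs 0 \<in> X0 \<and> is_run T xs us n \<longrightarrow> \<not> close_run_ends X0 T H \<delta> xs n \<subseteq> XS)"
proof -
  have ends_in_X: "close_run_ends X0 T H \<delta> xs n \<subseteq> X" for xs n
    using is_run_end_in_states[OF assms(1,2)] unfolding close_run_ends_def by blast
  text \<open>With \<open>\<delta> \<ge> 0\<close> the run itself is one of the close runs, so its end lies in the set.\<close>
  have own_end: "xs n \<in> close_run_ends X0 T H \<delta> xs n"
    if "xs 0 \<in> X0" "is_run T xs us n" for xs us n
    using that assms(3) unfolding close_run_ends_def by auto
  show ?thesis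
  proof (intro iffI allI impI notI)
    fix xs us n
    assume "approx_cso X X0 XS T H \<delta>" and "xs 0 \<in> X0 \<and> is_run T xs us n"
      and sub: "close_run_ends X0 T H \<delta> xs n \<subseteq> XS"
    with own_end obtain xs' us' where "xs' 0 \<in> X0" "is_run T xs' us' n" "xs' n \<notin> XS"
      "\<forall>i\<le>n. dist (H (xs i)) (H (xs' i)) \<le> \<delta>"
      unfolding approx_cso_def by blast
    then have "xs' n \<in> close_run_ends X0 T H \<delta> xs n \<and> xs' n \<notin> XS"
      unfolding close_run_ends_def by blast
    with sub show False by blast
  next
    assume leaves: "\<forall>xs us n. xs 0 \<in> X0 \<and> is_run T xs us n \<longrightarrow> \<not> close_run_ends X0 T H \<delta> xs n \<subseteq> XS"
    show "approx_cso X X0 XS T H \<delta>"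
      unfolding approx_cso_def
    proof (intro allI impI)
      fix n xs us assume "xs 0 \<in> X0 \<and> is_run T xs us n \<and> xs n \<in> XS"
      with leaves obtain x' where "x' \<in> close_run_ends X0 T H \<delta> xs n" "x' \<notin> XS"
        by blast
      with ends_in_X show "\<exists>xs' us'. xs' 0 \<in> X0 \<and> is_run T xs' us' n \<and> xs' n \<in> X - XS \<and>
          (\<forall>i\<le>n. dist (H (xs i)) (H (xs' i)) \<le> \<delta>)"
        unfolding close_run_ends_def by blast
    qed
  qed
qed

theorem mainTheorem3:
  fixes X X0 XS :: "'x set" and U :: "'u set" and T :: "('x \<times> 'u \<times> 'x) set"
    and H :: "'x \<Rightarrow> 'y::metric_space" and \<delta> :: real
  assumes "is_system X X0 XS U T"
    and "\<delta> \<ge> 0"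
  shows "approx_cso X X0 XS T H \<delta> \<longleftrightarrow>
         (\<forall>(x, q) \<in> est_reach X X0 U T H \<delta>. \<not> q \<subseteq> XS)"
proof -
  have X0: "X0 \<subseteq> X" and T: "T \<subseteq> X \<times> U \<times> X"
    using assms(1) unfolding is_system_def by auto
  show ?thesis
    unfolding approx_cso_iff_close_run_ends[OF X0 T assms(2)] est_reach_eq_close_run_ends[OF T]
    by blast
qed

end
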